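(* Let $p\in(0,1)$ and let $Y_1,Y_2,\dots$ be i.i.d. with $Y_i=1-\mathrm{Geo}(p)$. Let $f(x)=(2-x)^{2-x}p(1-p)^{1-x}(1-x)^{x-1}$ for $x\le1$ (with $0^0=1$). (a) There is an absolute constant $C$ such that for every $a\in[2-p^{-1},1]$ and every positive integer $m$, $\Pr[Y_1+\dots+Y_m\ge am]\le Cmf(a)^m$. (b) As $m\to\infty$, uniformly for all $a\in[0,1]$, $\Pr[Y_1+\dots+Y_m\ge am]\ge[f(a)-o(1)]^m$. (c) If $p\ge1/2$, then as $m\to\infty$, uniformly for all $a\in[0,2-\frac1p]$, $\Pr[Y_1+\dots+Y_m\ge am]\ge[1-o(1)]^m$.
   Context: $\mathrm{Geo}(p)$ has $\Pr[\mathrm{Geo}(p)=k]=(1-p)^kp$ for integers $k\ge0$. *)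

theory Defs
  imports "HOL-Probability.Probability"
begin

definition Y_pmf :: "real \<Rightarrow> real pmf" where
  "Y_pmf p = map_pmf (\<lambda>k. 1 - real k) (geometric_pmf p)"

fun Ysum_pmf :: "real \<Rightarrow> nat \<Rightarrow> real pmf" where
  "Ysum_pmf p 0 = return_pmf 0"
| "Ysum_pmf p (Suc m) =
     bind_pmf (Y_pmf p) (\<lambda>y. bind_pmf (Ysum_pmf p m) (\<lambda>s. return_pmf (y + s)))"

definition pow0 :: "real \<Rightarrow> real \<Rightarrow> real" where
  "pow0 b e = (if b = 0 then (if e = 0 then 1 else 0) else b powr e)"

definition f13 :: "real \<Rightarrow> real \<Rightarrow> real" where
  "f13 p x = pow0 (2 - x) (2 - x) * p * pow0 (1 - p) (1 - x) * pow0 (1 - x) (x - 1)"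

end

theory Submission
  imports Defs "HOL-Real_Asymp.Real_Asymp"
begin

text \<open>
  A sum of \<open>m\<close> independent \<open>Geo(p)\<close> variables is negative binomial, so \<open>Y\<^sub>1 + \<dots> + Y\<^sub>m = m - N\<close>
  with \<open>N \<sim> NB(m, p)\<close>, and the event is \<open>N \<le> b m\<close> for \<open>b = 1 - a\<close>. In terms of \<open>b\<close>,
  \<open>f(1 - b) = p (1 + b) ((1 - p)(1 + b) / b)\<^sup>b\<close>.

  Upper bound: \<open>Pr[NB(m, p) = k] = (p / (1 - q))\<^sup>m ((1 - p) / q)\<^sup>k Pr[NB(m, 1 - q) = k]\<close>, and for
  \<open>q = b / (1 + b)\<close> the factor \<open>(1 - p) / q\<close> is at least 1 exactly when \<open>a \<ge> 2 - 1/p\<close>. Bounding it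
  by its value at \<open>k = b m\<close> is a Chernoff bound giving \<open>Pr[N \<le> b m] \<le> f(a)\<^sup>m\<close>, so \<open>C = 1\<close> works.

  Lower bound: the single atom \<open>K = \<lfloor>b m\<rfloor>\<close> has mass at least \<open>f(a)\<^sup>m / (12 e\<^sup>2 m\<^sup>2)\<close>, because the
  central term \<open>C(K + m, K) K\<^sup>K m\<^sup>m\<close> is the largest of the \<open>K + m + 1\<close> terms of the binomial expansion
  of \<open>(K + m)\<^bsup>K + m\<^esup>\<close>; as \<open>f\<close> is bounded on \<open>[0, 1]\<close>, this polynomial loss is \<open>(1 - o(1))\<^sup>m\<close>
  uniformly in \<open>a\<close>. Part (c) is (b) at the mean \<open>a = 2 - 1/p\<close> of \<open>Y\<close>, where \<open>f(a) = 1\<close>.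
\<close>

lemma Ysum_pmf_eq_map_neg_binomial:
  "Ysum_pmf p m = map_pmf (\<lambda>k. real m - real k) (neg_binomial_pmf m p)"
proof (induction m)
  case (Suc m)
  show ?case
    unfolding Ysum_pmf.simps Suc neg_binomial_pmf_Suc Y_pmf_def
    by (simp add: pair_pmf_def map_pmf_def bind_assoc_pmf bind_return_pmf algebra_simps)
qed simp

lemma prob_Ysum_ge_eq_neg_binomial_atMost:
  assumes "a \<le> 1"
  shows "measure_pmf.prob (Ysum_pmf p m) {s. s \<ge> a * real m}
           = measure_pmf.prob (neg_binomial_pmf m p) {..nat \<lfloor>(1 - a) * real m\<rfloor>}"
proof -
  have "0 \<le> (1 - a) * real m" using assms by simp
  then have "real k \<le> (1 - a) * real m \<longleftrightarrow> k \<le> nat \<lfloor>(1 - a) * real m\<rfloor>" for k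
    by (meson le_nat_floor of_nat_floor of_nat_mono order.trans)
  then have "{k. real m - real k \<ge> a * real m} = {..nat \<lfloor>(1 - a) * real m\<rfloor>}"
    by (auto simp: algebra_simps)
  then show ?thesis
    unfolding Ysum_pmf_eq_map_neg_binomial measure_map_pmf vimage_def by simp
qed

lemma exp_neg_one_le_powr_self:
  fixes x :: real assumes "0 < x" shows "exp (- 1) \<le> x powr x"
proof -
  have "ln (1 / x) \<le> 1 / x - 1" using assms by (intro ln_le_minus_one) simp
  then have "x * (- ln x) \<le> x * (1 / x - 1)" using assms by (intro mult_left_mono) (auto simp: ln_div)
  then have "- 1 \<le> x * ln x" using assms by (simp add: algebra_simps)
  then show ?thesis using assms by (simp add: powr_def)
qed

lemma nat_floor_power_self_le:
  fixes x :: real assumes "0 < x"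
  shows "real (nat \<lfloor>x\<rfloor>) ^ nat \<lfloor>x\<rfloor> \<le> exp 1 * x powr x"
proof (cases "nat \<lfloor>x\<rfloor> = 0")
  case True
  have "exp 1 * exp (- 1) \<le> exp 1 * x powr x"
    using exp_neg_one_le_powr_self[OF assms] by simp
  then show ?thesis using True by (simp add: exp_minus)
next
  case False
  define K where "K = nat \<lfloor>x\<rfloor>"
  have K: "1 \<le> real K" "real K \<le> x" using False assms by (auto simp: K_def of_nat_floor)
  have "real K ^ K = real K powr real K" using K by (simp add: powr_realpow)
  also have "\<dots> \<le> x powr x" using K by (intro powr_mono_both) auto
  also have "\<dots> \<le> exp 1 * x powr x" by (simp add: mult_le_cancel_right1)
  finally show ?thesis unfolding K_def .
qed

lemma one_plus_inverse_powr_le_exp_1: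
  fixes u :: real assumes "0 < u" shows "(1 + 1 / u) powr u \<le> exp 1"
proof -
  have "0 < 1 + 1 / u" using assms by (simp add: add_pos_nonneg)
  then have "(1 + 1 / u) powr u = exp (u * ln (1 + 1 / u))" by (simp add: powr_def)
  also have "\<dots> \<le> exp 1"
    using assms ln_add_one_self_le_self[of "1 / u"] mult_left_mono[of "ln (1 + 1 / u)" "1 / u" u]
    by simp
  finally show ?thesis .
qed

lemma powr_self_le_of_le_add_one:
  fixes u v :: real assumes "1 \<le> u" "u \<le> v" "v \<le> u + 1"
  shows "v powr v \<le> exp 1 * v * u powr u"
proof -
  have "v powr v = u powr u * (v / u) powr u * v powr (v - u)"
    using assms by (simp add: powr_divide powr_add [symmetric])
  also have "\<dots> \<le> u powr u * exp 1 * v"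
  proof (intro mult_mono)
    have "(v / u) powr u \<le> (1 + 1 / u) powr u"
      using assms by (intro powr_mono2) (auto simp: field_simps)
    then show "(v / u) powr u \<le> exp 1"
      using one_plus_inverse_powr_le_exp_1[of u] assms by simp
    show "v powr (v - u) \<le> v" using assms powr_mono[of "v - u" 1 v] by simp
  qed (use assms in auto)
  finally show ?thesis by (simp add: mult_ac)
qed

lemma f13_one: "f13 p 1 = p"
  by (simp add: f13_def pow0_def)

lemma f13_nonneg: "0 \<le> p \<Longrightarrow> 0 \<le> f13 p a"
  by (simp add: f13_def pow0_def)

lemma f13_one_minus:
  assumes "p < 1" "0 < b"
  shows "f13 p (1 - b) = p * (1 + b) * ((1 - p) * (1 + b) / b) powr b"
  using assms unfolding f13_def pow0_def
  by (simp add: powr_mult powr_divide powr_add powr_minus divide_inverse inverse_powr)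

lemma f13_mean_eq_1: assumes "0 < p" "p < 1" shows "f13 p (2 - 1 / p) = 1"
proof -
  have "2 - 1 / p = 1 - (1 - p) / p" using assms by (simp add: field_simps)
  also have "f13 p \<dots> = 1" using assms by (subst f13_one_minus) (simp_all add: field_simps)
  finally show ?thesis .
qed

lemma f13_power_eq:
  assumes "p < 1" "0 < b" "0 < m"
  shows "f13 p (1 - b) ^ m * (real m ^ m * (b * real m) powr (b * real m))
           = p ^ m * (1 - p) powr (b * real m) * (b * real m + real m) powr (b * real m + real m)"
proof -
  define x where "x = b * real m"
  have x: "0 < x" using assms by (simp add: x_def)
  have "f13 p (1 - b) ^ m = p ^ m * (1 + b) ^ m * ((1 - p) * (1 + b) / b) powr x"
    using assms by (simp add: f13_one_minus power_mult_distrib powr_power x_def mult.commute)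
  also have "((1 - p) * (1 + b) / b) powr x = (1 - p) powr x * (1 + b) powr x / b powr x"
    using assms by (simp add: powr_mult powr_divide)
  finally have f: "f13 p (1 - b) ^ m = p ^ m * (1 + b) ^ m * ((1 - p) powr x * (1 + b) powr x / b powr x)" .
  have "x + real m = real m * (1 + b)" by (simp add: x_def algebra_simps)
  moreover have "0 < real m * (1 + b)" using assms by simp
  ultimately have "(x + real m) powr (x + real m) = (real m * (1 + b)) powr x * (real m * (1 + b)) ^ m"
    by (metis powr_add powr_realpow)
  also have "\<dots> = real m powr x * (1 + b) powr x * real m ^ m * (1 + b) ^ m"
    using assms by (simp add: powr_mult power_mult_distrib)
  finally have xm: "(x + real m) powr (x + real m) = real m powr x * (1 + b) powr x * real m ^ m * (1 + b) ^ m" .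
  have "x powr x = b powr x * real m powr x" using assms by (simp add: x_def powr_mult)
  then show ?thesis using assms unfolding x_def[symmetric] f xm by (simp add: field_simps)
qed

lemma f13_bounds:
  assumes "0 < p" "p < 1" "0 \<le> b" "b \<le> 1"
  shows "p * (1 - p) \<le> f13 p (1 - b)" "f13 p (1 - b) \<le> 6"
proof -
  have "p * (1 - p) \<le> f13 p (1 - b) \<and> f13 p (1 - b) \<le> 6"
  proof (cases "b = 0")
    case True
    then show ?thesis using assms by (simp add: f13_one mult_le_cancel_left1)
  next
    case False
    then have b: "0 < b" using assms by simp
    have "(1 - p) * (1 + b) / b = (1 - p) * (1 + 1 / b)" using b by (simp add: field_simps)
    then have f: "f13 p (1 - b) = p * (1 + b) * (1 - p) powr b * (1 + 1 / b) powr b"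
      using assms b by (simp add: f13_one_minus powr_mult add_pos_nonneg)
    have "1 - p \<le> (1 - p) powr b" "(1 - p) powr b \<le> 1"
      using assms powr_mono'[of b 1 "1 - p"] powr_mono'[of 0 b "1 - p"] by auto
    moreover have "1 \<le> (1 + 1 / b) powr b" "(1 + 1 / b) powr b \<le> 3"
      using b one_plus_inverse_powr_le_exp_1[OF b] exp_le by (auto intro: ge_one_powr_ge_zero)
    moreover have "p \<le> p * (1 + b)" "p * (1 + b) \<le> 2"
      using assms mult_mono[of p 1 "1 + b" 2] by auto
    ultimately have "p * (1 - p) * 1 \<le> f13 p (1 - b)" "f13 p (1 - b) \<le> 2 * 1 * 3"
      unfolding f using assms by (intro mult_mono; simp)+
    then show ?thesis by simp
  qed
  then show "p * (1 - p) \<le> f13 p (1 - b)" "f13 p (1 - b) \<le> 6" by auto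
qed

lemma pmf_neg_binomial_tilt:
  assumes "0 < p" "p \<le> 1" "0 < q" "q < 1"
  shows "pmf (neg_binomial_pmf m p) k
           = (p / (1 - q)) ^ m * ((1 - p) / q) ^ k * pmf (neg_binomial_pmf m (1 - q)) k"
  using assms by (simp add: pmf_neg_binomial power_divide)

lemma prob_neg_binomial_atMost_le:
  assumes "0 < p" "0 < q" "q \<le> 1 - p" "real K \<le> x"
  shows "measure_pmf.prob (neg_binomial_pmf m p) {..K} \<le> (p / (1 - q)) ^ m * ((1 - p) / q) powr x"
proof -
  define r where "r = (1 - p) / q"
  have r: "1 \<le> r" using assms by (simp add: r_def)
  have "r ^ k \<le> r powr x" if "k \<le> K" for k
    using r that assms(4) by (simp add: powr_realpow [symmetric] powr_mono)
  then have "measure_pmf.prob (neg_binomial_pmf m p) {..K}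
      \<le> (\<Sum>k\<le>K. (p / (1 - q)) ^ m * r powr x * pmf (neg_binomial_pmf m (1 - q)) k)"
    using assms unfolding measure_measure_pmf_finite[OF finite_atMost]
    by (intro sum_mono, subst pmf_neg_binomial_tilt[of p q]) (auto simp: r_def mult_right_mono)
  also have "\<dots> = (p / (1 - q)) ^ m * r powr x * measure_pmf.prob (neg_binomial_pmf m (1 - q)) {..K}"
    by (simp add: measure_measure_pmf_finite sum_distrib_left)
  also have "\<dots> \<le> (p / (1 - q)) ^ m * r powr x"
    using assms by (intro mult_left_le) auto
  finally show ?thesis unfolding r_def .
qed

lemma prob_Ysum_ge_le_f13_power:
  assumes "0 < p" "p < 1" "2 - 1 / p \<le> a" "a \<le> 1"
  shows "measure_pmf.prob (Ysum_pmf p m) {s. s \<ge> a * real m} \<le> f13 p a ^ m"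
proof -
  define b where "b = 1 - a"
  have a: "a = 1 - b" by (simp add: b_def)
  have "b * p \<le> 1 - p" using assms by (simp add: b_def field_simps)
  have "measure_pmf.prob (neg_binomial_pmf m p) {..nat \<lfloor>b * real m\<rfloor>} \<le> f13 p a ^ m"
  proof (cases "b = 0")
    case True
    then show ?thesis using assms by (simp add: a measure_pmf_single pmf_neg_binomial f13_one)
  next
    case False
    then have "0 < b" using assms by (simp add: b_def)
    define q where "q = b / (1 + b)"
    have "q \<le> 1 - p" using \<open>b * p \<le> 1 - p\<close> \<open>0 < b\<close> by (simp add: q_def field_simps)
    moreover have "p / (1 - q) = p * (1 + b)" "(1 - p) / q = (1 - p) * (1 + b) / b"
      using \<open>0 < b\<close> by (simp_all add: q_def field_simps)
    ultimately have "measure_pmf.prob (neg_binomial_pmf m p) {..nat \<lfloor>b * real m\<rfloor>}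
        \<le> (p * (1 + b)) ^ m * ((1 - p) * (1 + b) / b) powr (b * real m)"
      using prob_neg_binomial_atMost_le[of p q "nat \<lfloor>b * real m\<rfloor>" "b * real m" m] \<open>0 < b\<close> assms
      by (simp add: q_def of_nat_floor)
    also have "\<dots> = f13 p a ^ m"
      using \<open>0 < b\<close> assms
      by (simp add: a f13_one_minus powr_powr [symmetric] powr_realpow power_mult_distrib)
    finally show ?thesis .
  qed
  then show ?thesis using assms by (simp add: prob_Ysum_ge_eq_neg_binomial_atMost b_def)
qed

lemma unimodal_le_peak:
  fixes T :: "nat \<Rightarrow> 'a::order"
  assumes up: "\<And>j. j < k \<Longrightarrow> T j \<le> T (Suc j)"
      and down: "\<And>j. k \<le> j \<Longrightarrow> j < n \<Longrightarrow> T (Suc j) \<le> T j"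
      and "j \<le> n"
  shows "T j \<le> T k"
proof (cases "j \<le> k")
  case True
  then show ?thesis
    by (induction k rule: dec_induct) (auto intro: order.trans up)
next
  case False
  then have "k \<le> j" by simp
  then show ?thesis using \<open>j \<le> n\<close>
  proof (induction j rule: dec_induct)
    case (step i)
    then have "T (Suc i) \<le> T i" by (intro down) auto
    with step show ?case by (auto intro: order.trans)
  qed simp
qed

lemma binomial_term_Suc:
  fixes x y :: real
  assumes "j < n"
  shows "real (Suc j) * y * (real (n choose Suc j) * x ^ Suc j * y ^ (n - Suc j))
           = real (n - j) * x * (real (n choose j) * x ^ j * y ^ (n - j))"
proof -
  have "Suc j * (n choose Suc j) = (n - j) * (n choose j)"
    using binomial_absorption[of j n] binomial_absorb_comp[of n j] by simp
  then have c: "real (Suc j) * real (n choose Suc j) = real (n - j) * real (n choose j)"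
    by (metis of_nat_mult)
  have y: "y * y ^ (n - Suc j) = y ^ (n - j)"
    using assms by (simp flip: power_Suc add: Suc_diff_Suc)
  have "real (Suc j) * y * (real (n choose Suc j) * x ^ Suc j * y ^ (n - Suc j))
      = (real (Suc j) * real (n choose Suc j)) * x ^ Suc j * (y * y ^ (n - Suc j))"
    by (simp only: mult_ac)
  also have "\<dots> = (real (n - j) * real (n choose j)) * x ^ Suc j * y ^ (n - j)"
    by (simp only: c y)
  finally show ?thesis by (simp add: mult_ac)
qed

lemma binomial_term_le_central:
  assumes "0 < m" "j \<le> K + m"
  shows "real ((K + m) choose j) * real K ^ j * real m ^ (K + m - j)
           \<le> real ((K + m) choose K) * real K ^ K * real m ^ m"
proof -
  define n where "n = K + m"
  define T where "T i = real (n choose i) * real K ^ i * real m ^ (n - i)" for i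
  have ratio: "real (Suc i) * real m * T (Suc i) = real (n - i) * real K * T i" if "i < n" for i
    using binomial_term_Suc[OF that, of m K] by (simp add: T_def)
  have pos: "0 < real (Suc i) * real m" for i using assms(1) by simp
  have T_nonneg: "0 \<le> T i" for i by (simp add: T_def)
  have up: "T i \<le> T (Suc i)" if "i < K" for i
  proof -
    have "real (Suc i) * real m \<le> real (n - i) * real K"
      using that by (subst mult.commute) (intro mult_mono, auto simp: n_def)
    then have "real (Suc i) * real m * T i \<le> real (n - i) * real K * T i"
      by (rule mult_right_mono[OF _ T_nonneg])
    also have "\<dots> = real (Suc i) * real m * T (Suc i)"
      by (rule ratio[symmetric]) (use that in \<open>simp add: n_def\<close>)
    finally have "real (Suc i) * real m * T i \<le> real (Suc i) * real m * T (Suc i)" .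
    then show ?thesis using pos mult_le_cancel_left_pos by blast
  qed
  have down: "T (Suc i) \<le> T i" if "K \<le> i" "i < n" for i
  proof -
    have "real (n - i) * real K \<le> real (Suc i) * real m"
      using that by (subst mult.commute) (intro mult_mono, auto simp: n_def)
    then have "real (n - i) * real K * T i \<le> real (Suc i) * real m * T i"
      by (rule mult_right_mono[OF _ T_nonneg])
    then have "real (Suc i) * real m * T (Suc i) \<le> real (Suc i) * real m * T i"
      by (simp only: ratio[OF that(2)])
    then show ?thesis using pos mult_le_cancel_left_pos by blast
  qed
  have "T j \<le> T K"
    using assms(2) by (intro unimodal_le_peak[of K T n j, OF up down]) (auto simp: n_def)
  then show ?thesis by (simp add: T_def n_def)
qed

lemma power_le_binomial_central_term:
  assumes "0 < m"
  shows "real (K + m) ^ (K + m) \<le> real (K + m + 1) * real ((K + m) choose K) * real K ^ K * real m ^ m"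
proof -
  have "real (K + m) ^ (K + m) = (\<Sum>j\<le>K + m. real ((K + m) choose j) * real K ^ j * real m ^ (K + m - j))"
    by (subst of_nat_add, subst binomial_ring) (simp add: algebra_simps)
  also have "\<dots> \<le> (\<Sum>j\<le>K + m. real ((K + m) choose K) * real K ^ K * real m ^ m)"
    using assms by (intro sum_mono binomial_term_le_central) auto
  finally show ?thesis by (simp add: algebra_simps)
qed

lemma pmf_neg_binomial_ge:
  assumes "0 < p" "p \<le> 1" "0 < m"
  shows "real m * p ^ m * (1 - p) ^ K * real (K + m) ^ (K + m)
           \<le> real (K + m) * real (K + m + 1) * real K ^ K * real m ^ m * pmf (neg_binomial_pmf m p) K"
proof -
  have c: "real m * real ((K + m) choose K) = real (K + m) * real (K + m - 1 choose K)"
    using binomial_absorb_comp[of "K + m" K] by (metis add_diff_cancel_left' of_nat_mult)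
  have "real m * p ^ m * (1 - p) ^ K * real (K + m) ^ (K + m)
      \<le> real m * p ^ m * (1 - p) ^ K * (real (K + m + 1) * real ((K + m) choose K) * real K ^ K * real m ^ m)"
    using assms by (intro mult_left_mono power_le_binomial_central_term) auto
  also have "\<dots> = (real m * real ((K + m) choose K)) * p ^ m * (1 - p) ^ K * real (K + m + 1) * real K ^ K * real m ^ m"
    by (simp only: mult_ac)
  also have "\<dots> = real (K + m) * real (K + m + 1) * real K ^ K * real m ^ m * pmf (neg_binomial_pmf m p) K"
    unfolding c using assms by (simp add: pmf_neg_binomial mult_ac)
  finally show ?thesis .
qed

lemma f13_power_le_floor_term:
  assumes "0 \<le> p" "p < 1" "0 < b" "0 < m"
  defines "x \<equiv> b * real m"
  defines "K \<equiv> nat \<lfloor>x\<rfloor>"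
  shows "f13 p (1 - b) ^ m * real m ^ m * real K ^ K
           \<le> exp 2 * (x + real m) * p ^ m * (1 - p) ^ K * real (K + m) ^ (K + m)"
proof -
  have x: "0 < x" using assms by (simp add: x_def)
  have K: "real K \<le> x" "x \<le> real K + 1" using x by (auto simp: K_def of_nat_floor)
  have n: "1 \<le> real (K + m)" using assms(4) by linarith
  have "f13 p (1 - b) ^ m * real m ^ m * real K ^ K \<le> f13 p (1 - b) ^ m * real m ^ m * (exp 1 * x powr x)"
    using nat_floor_power_self_le[OF x] f13_nonneg[OF assms(1)] by (intro mult_left_mono) (auto simp: K_def)
  also have "\<dots> = exp 1 * p ^ m * (1 - p) powr x * (x + real m) powr (x + real m)"
    using f13_power_eq[OF assms(2-4)] by (simp add: x_def mult_ac)
  also have "\<dots> \<le> exp 1 * p ^ m * (1 - p) ^ K * (exp 1 * (x + real m) * real (K + m) ^ (K + m))"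
  proof (intro mult_mono mult_left_mono)
    have "(1 - p) powr x \<le> (1 - p) powr real K" using assms(1,2) K by (intro powr_mono') auto
    then show "(1 - p) powr x \<le> (1 - p) ^ K" using assms(2) by (simp add: powr_realpow)
    show "(x + real m) powr (x + real m) \<le> exp 1 * (x + real m) * real (K + m) ^ (K + m)"
      using powr_self_le_of_le_add_one[of "real (K + m)" "x + real m"] n K
        powr_realpow[of "real (K + m)" "K + m"]
      by simp
  qed (use assms(1,2) x in auto)
  also have "\<dots> = exp 2 * (x + real m) * p ^ m * (1 - p) ^ K * real (K + m) ^ (K + m)"
    by (simp add: mult_ac flip: exp_add)
  finally show ?thesis .
qed

lemma f13_power_le_pmf_neg_binomial_floor:
  assumes "0 < p" "p < 1" "0 < b" "b \<le> 1" "0 < m"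
  shows "f13 p (1 - b) ^ m \<le> 12 * exp 2 * real m ^ 2 * pmf (neg_binomial_pmf m p) (nat \<lfloor>b * real m\<rfloor>)"
proof -
  define K where "K = nat \<lfloor>b * real m\<rfloor>"
  define P where "P = pmf (neg_binomial_pmf m p) K"
  define W where "W = real m * real m ^ m * real K ^ K"
  have m: "1 \<le> real m" using assms(5) by simp
  have "b * real m \<le> real m" using assms by (simp add: mult_left_le_one_le)
  moreover have "real K \<le> b * real m" using assms by (simp add: K_def of_nat_floor)
  ultimately have Km: "real K \<le> real m" by linarith
  have "W * f13 p (1 - b) ^ m \<le> exp 2 * (b * real m + real m) * (real m * p ^ m * (1 - p) ^ K * real (K + m) ^ (K + m))"
    using f13_power_le_floor_term[of p b m] mult_left_mono[of _ _ "real m"] assms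
    by (simp add: W_def K_def mult_ac)
  also have "\<dots> \<le> exp 2 * (b * real m + real m) * (real (K + m) * real (K + m + 1) * (real K ^ K * real m ^ m * P))"
    using pmf_neg_binomial_ge[of p m K] assms by (intro mult_left_mono) (auto simp: P_def mult_ac)
  also have "\<dots> = exp 2 * ((b * real m + real m) * real (K + m) * real (K + m + 1)) * (real K ^ K * real m ^ m * P)"
    by (simp add: mult_ac)
  also have "\<dots> \<le> exp 2 * (2 * real m * (2 * real m) * (3 * real m)) * (real K ^ K * real m ^ m * P)"
  proof -
    have "(b * real m + real m) * real (K + m) * real (K + m + 1) \<le> 2 * real m * (2 * real m) * (3 * real m)"
      using \<open>b * real m \<le> real m\<close> Km m assms(3) by (intro mult_mono) auto
    then show ?thesis by (intro mult_right_mono mult_left_mono) (auto simp: P_def)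
  qed
  also have "\<dots> = W * (12 * exp 2 * real m ^ 2 * P)"
    by (simp add: W_def power2_eq_square mult_ac)
  finally have "W * f13 p (1 - b) ^ m \<le> W * (12 * exp 2 * real m ^ 2 * P)" .
  moreover have "0 < W" using assms by (cases "K = 0") (auto simp: W_def)
  ultimately show ?thesis unfolding P_def K_def using mult_le_cancel_left_pos by blast
qed

lemma one_le_polynomial_factor:
  assumes "0 < m" shows "1 \<le> 12 * exp 2 * real m ^ 2"
proof -
  have "1 \<le> real m ^ 2" using assms by simp
  moreover have "1 \<le> 12 * exp (2::real)" using one_le_exp_iff[of 2] by linarith
  ultimately show ?thesis using mult_mono[of 1 "12 * exp 2" 1 "real m ^ 2"] by simp
qed

lemma f13_power_le_prob_Ysum_ge:
  assumes "0 < p" "p < 1" "0 \<le> a" "a \<le> 1" "0 < m"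
  shows "f13 p a ^ m \<le> 12 * exp 2 * real m ^ 2 * measure_pmf.prob (Ysum_pmf p m) {s. s \<ge> a * real m}"
proof -
  define b where "b = 1 - a"
  have a: "a = 1 - b" by (simp add: b_def)
  have "f13 p a ^ m \<le> 12 * exp 2 * real m ^ 2 * pmf (neg_binomial_pmf m p) (nat \<lfloor>b * real m\<rfloor>)"
  proof (cases "b = 0")
    case True
    then have "f13 p a ^ m = pmf (neg_binomial_pmf m p) (nat \<lfloor>b * real m\<rfloor>)"
      using assms by (simp add: a f13_one pmf_neg_binomial)
    then show ?thesis
      using one_le_polynomial_factor[OF assms(5)] by (metis mult_1 mult_right_mono pmf_nonneg)
  next
    case False
    then show ?thesis using assms f13_power_le_pmf_neg_binomial_floor[of p b m] by (simp add: a)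
  qed
  also have "\<dots> \<le> 12 * exp 2 * real m ^ 2 * measure_pmf.prob (neg_binomial_pmf m p) {..nat \<lfloor>b * real m\<rfloor>}"
    by (intro mult_left_mono) (auto simp flip: measure_pmf_single intro!: measure_pmf.finite_measure_mono)
  finally show ?thesis using assms by (simp add: prob_Ysum_ge_eq_neg_binomial_atMost b_def)
qed

lemma powr_minus_inverse_nat:
  fixes D :: real assumes "1 \<le> D" "0 < m"
  shows "D powr (- 1 / real m) \<le> 1" "(D powr (- 1 / real m)) ^ m = 1 / D"
proof -
  have "D powr (- 1 / real m) \<le> D powr 0" using assms by (intro powr_mono) auto
  then show "D powr (- 1 / real m) \<le> 1" using assms by simp
  have "(D powr (- 1 / real m)) ^ m = D powr (real m * (- 1 / real m))"
    using assms by (intro powr_power) auto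
  also have "\<dots> = 1 / D" using assms by (simp add: powr_minus divide_inverse)
  finally show "(D powr (- 1 / real m)) ^ m = 1 / D" .
qed

lemma Ysum_large_deviation_lower:
  assumes "0 < p" "p < 1"
  shows "\<exists>\<epsilon>::nat \<Rightarrow> real. \<epsilon> \<longlonglongrightarrow> 0 \<and>
           (\<forall>\<^sub>F m in sequentially. \<forall>a. 0 \<le> a \<and> a \<le> 1 \<longrightarrow>
              measure_pmf.prob (Ysum_pmf p m) {s. s \<ge> a * real m} \<ge> (f13 p a - \<epsilon> m) ^ m)"
proof -
  define D :: "nat \<Rightarrow> real" where "D m = 12 * exp 2 * real m ^ 2" for m
  define c where "c m = D m powr (- 1 / real m)" for m
  \<comment> \<open>Since \<open>f \<le> 6\<close>, \<open>(f - 6 (1 - c m))\<^sup>m \<le> (f c m)\<^sup>m = f\<^sup>m / D m\<close>, which absorbs the polynomial loss.\<close>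
  have "c \<longlonglongrightarrow> 1" unfolding c_def D_def by real_asymp
  then have "(\<lambda>m. 6 * (1 - c m)) \<longlonglongrightarrow> 6 * (1 - 1)" by (intro tendsto_intros)
  then have lim: "(\<lambda>m. 6 * (1 - c m)) \<longlonglongrightarrow> 0" by simp
  have "\<forall>\<^sub>F m in sequentially. 6 * (1 - c m) \<le> p * (1 - p)"
    using order_tendstoD(2)[OF lim, of "p * (1 - p)"] assms by (auto elim: eventually_mono)
  then have "\<forall>\<^sub>F m in sequentially. 6 * (1 - c m) \<le> p * (1 - p) \<and> 0 < m"
    using eventually_gt_at_top[of 0] by (rule eventually_conj)
  then have "\<forall>\<^sub>F m in sequentially. \<forall>a. 0 \<le> a \<and> a \<le> 1 \<longrightarrow>
      measure_pmf.prob (Ysum_pmf p m) {s. s \<ge> a * real m} \<ge> (f13 p a - 6 * (1 - c m)) ^ m"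
  proof (rule eventually_mono, safe)
    fix m :: nat and a :: real
    assume m: "6 * (1 - c m) \<le> p * (1 - p)" "0 < m" and a: "0 \<le> a" "a \<le> 1"
    have D: "1 \<le> D m" using one_le_polynomial_factor[OF m(2)] by (simp add: D_def)
    have c: "c m \<le> 1" "c m ^ m = 1 / D m"
      unfolding c_def using powr_minus_inverse_nat[OF D m(2)] by auto
    have f: "p * (1 - p) \<le> f13 p a" "f13 p a \<le> 6"
      using f13_bounds[of p "1 - a"] assms a by auto
    have "(f13 p a - 6 * (1 - c m)) ^ m \<le> (f13 p a * c m) ^ m"
    proof (rule power_mono)
      have "f13 p a * (1 - c m) \<le> 6 * (1 - c m)" using f c by (intro mult_right_mono) auto
      then show "f13 p a - 6 * (1 - c m) \<le> f13 p a * c m" by (simp add: right_diff_distrib)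
    qed (use m f in linarith)
    also have "\<dots> = f13 p a ^ m / D m"
      using c by (simp add: power_mult_distrib)
    also have "\<dots> \<le> measure_pmf.prob (Ysum_pmf p m) {s. s \<ge> a * real m}"
      using f13_power_le_prob_Ysum_ge[OF assms a m(2), folded D_def] D
      by (simp add: pos_divide_le_eq mult.commute)
    finally show "(f13 p a - 6 * (1 - c m)) ^ m \<le> measure_pmf.prob (Ysum_pmf p m) {s. s \<ge> a * real m}" .
  qed
  with lim show ?thesis by (intro exI[of _ "\<lambda>m. 6 * (1 - c m)"] conjI)
qed

lemma Ysum_large_deviation_lower_below_mean:
  assumes "0 < p" "p < 1"
  shows "\<exists>\<epsilon>::nat \<Rightarrow> real. \<epsilon> \<longlonglongrightarrow> 0 \<and>
           (\<forall>\<^sub>F m in sequentially. \<forall>a. 0 \<le> a \<and> a \<le> 2 - 1 / p \<longrightarrow>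
              measure_pmf.prob (Ysum_pmf p m) {s. s \<ge> a * real m} \<ge> (1 - \<epsilon> m) ^ m)"
proof -
  obtain \<epsilon> where \<epsilon>: "\<epsilon> \<longlonglongrightarrow> 0" and ev: "\<forall>\<^sub>F m in sequentially. \<forall>a. 0 \<le> a \<and> a \<le> 1 \<longrightarrow>
      measure_pmf.prob (Ysum_pmf p m) {s. s \<ge> a * real m} \<ge> (f13 p a - \<epsilon> m) ^ m"
    using Ysum_large_deviation_lower[OF assms] by blast
  have "2 - 1 / p \<le> 1" using assms by simp
  have "\<forall>\<^sub>F m in sequentially. \<forall>a. 0 \<le> a \<and> a \<le> 2 - 1 / p \<longrightarrow>
      measure_pmf.prob (Ysum_pmf p m) {s. s \<ge> a * real m} \<ge> (1 - \<epsilon> m) ^ m"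
  proof (rule eventually_mono[OF ev], safe)
    fix m :: nat and a :: real
    assume lower: "\<forall>a. 0 \<le> a \<and> a \<le> 1 \<longrightarrow>
        measure_pmf.prob (Ysum_pmf p m) {s. s \<ge> a * real m} \<ge> (f13 p a - \<epsilon> m) ^ m"
      and a: "0 \<le> a" "a \<le> 2 - 1 / p"
    have "(1 - \<epsilon> m) ^ m \<le> measure_pmf.prob (Ysum_pmf p m) {s. s \<ge> (2 - 1 / p) * real m}"
      using lower[rule_format, of "2 - 1 / p"] \<open>2 - 1 / p \<le> 1\<close> a f13_mean_eq_1[OF assms] by simp
    also have "\<dots> \<le> measure_pmf.prob (Ysum_pmf p m) {s. s \<ge> a * real m}"
      using a mult_right_mono[of a "2 - 1 / p" "real m"]
      by (intro measure_pmf.finite_measure_mono) auto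
    finally show "(1 - \<epsilon> m) ^ m \<le> measure_pmf.prob (Ysum_pmf p m) {s. s \<ge> a * real m}" .
  qed
  with \<epsilon> show ?thesis by blast
qed

theorem lemma13:
  shows
   "(\<exists>C::real. \<forall>p::real. 0 < p \<and> p < 1 \<longrightarrow>
        (\<forall>a::real. \<forall>m::nat. 2 - 1 / p \<le> a \<and> a \<le> 1 \<and> 0 < m \<longrightarrow>
           measure_pmf.prob (Ysum_pmf p m) {s. s \<ge> a * real m}
             \<le> C * real m * (f13 p a) ^ m))
    \<and> (\<forall>p::real. 0 < p \<and> p < 1 \<longrightarrow>
        (\<exists>\<epsilon>::nat \<Rightarrow> real. \<epsilon> \<longlonglongrightarrow> 0 \<and>
           (\<forall>\<^sub>F m in sequentially. \<forall>a::real. 0 \<le> a \<and> a \<le> 1 \<longrightarrow>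
              measure_pmf.prob (Ysum_pmf p m) {s. s \<ge> a * real m}
                \<ge> (f13 p a - \<epsilon> m) ^ m)))
    \<and> (\<forall>p::real. 1 / 2 \<le> p \<and> p < 1 \<longrightarrow>
        (\<exists>\<epsilon>::nat \<Rightarrow> real. \<epsilon> \<longlonglongrightarrow> 0 \<and>
           (\<forall>\<^sub>F m in sequentially. \<forall>a::real. 0 \<le> a \<and> a \<le> 2 - 1 / p \<longrightarrow>
              measure_pmf.prob (Ysum_pmf p m) {s. s \<ge> a * real m}
                \<ge> (1 - \<epsilon> m) ^ m)))"
proof (intro conjI)
  have "measure_pmf.prob (Ysum_pmf p m) {s. s \<ge> a * real m} \<le> 1 * real m * f13 p a ^ m"
    if "0 < p" "p < 1" "2 - 1 / p \<le> a" "a \<le> 1" "0 < m" for p a m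
  proof -
    have "measure_pmf.prob (Ysum_pmf p m) {s. s \<ge> a * real m} \<le> f13 p a ^ m"
      using prob_Ysum_ge_le_f13_power that by blast
    also have "\<dots> \<le> 1 * real m * f13 p a ^ m"
      using that f13_nonneg[of p a] by (simp add: mult_le_cancel_right1)
    finally show ?thesis .
  qed
  then show "\<exists>C::real. \<forall>p. 0 < p \<and> p < 1 \<longrightarrow>
      (\<forall>a m. 2 - 1 / p \<le> a \<and> a \<le> 1 \<and> 0 < m \<longrightarrow>
         measure_pmf.prob (Ysum_pmf p m) {s. s \<ge> a * real m} \<le> C * real m * f13 p a ^ m)"
    by blast
qed (use Ysum_large_deviation_lower Ysum_large_deviation_lower_below_mean in auto)

end
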